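(* Let $K$ be an algebraically closed field, $m\ge1$ and $2\le a\le b$ integers, $S=K[[x,y_1,\dots,y_m]]$, $g=g(y_1,\dots,y_m)\in(\underline{y})^b\setminus(\underline{y})^{b+1}$, $A=S/(x^a-g)$, $Q=(y_1,\dots,y_m)A$. Let $d=\gcd(a,b)$, $a'=a/d$, $b'=b/d$, $n_k=\lfloor kb/a\rfloor$ for $k=1,\dots,a-1$, and for $n\ge1$ define \[J_n=Q^n+xQ^{n-n_1}+x^2Q^{n-n_2}+\cdots+x^{a-1}Q^{n-n_{a-1}},\] \[I_n=\big(x^ky_1^{i_1}\cdots y_m^{i_m} : k,i_1,\dots,i_m\in\mathbb{Z}_{\ge0},\ kb'+(i_1+\cdots+i_m)a'\ge n\big)A.\] Then $J_n=I_{na'}$ for every $n\ge1$.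
   Context: $(\underline{y})=(y_1,\dots,y_m)$; by convention $Q^j=A$ for $j\le0$. *)

theory Defs
  imports "HOL-Computational_Algebra.Polynomial" "HOL-Algebra.QuotRing" "HOL-Algebra.Ideal_Product"
begin

text \<open>Formal power series in the variables t_0, ..., t_m over a field K, where
  t_0 plays the role of x and t_1, ..., t_m the role of y_1, ..., y_m.\<close>

definition mono_ok :: "nat \<Rightarrow> (nat \<Rightarrow> nat) \<Rightarrow> bool" where
  "mono_ok m e \<longleftrightarrow> (\<forall>i>m. e i = 0)"

definition pser_ring :: "nat \<Rightarrow> ((nat \<Rightarrow> nat) \<Rightarrow> 'a::field) ring" where
  "pser_ring m =
    \<lparr> carrier = {f. \<forall>e. \<not> mono_ok m e \<longrightarrow> f e = 0},
      mult = (\<lambda>f g e. if mono_ok m e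
                       then (\<Sum>e1\<in>{e1. \<forall>i. e1 i \<le> e i}. f e1 * g (\<lambda>i. e i - e1 i))
                       else 0),
      one = (\<lambda>e. if e = (\<lambda>_. 0) then 1 else 0),
      zero = (\<lambda>_. 0),
      add = (\<lambda>f g e. f e + g e) \<rparr>"

definition pmono :: "(nat \<Rightarrow> nat) \<Rightarrow> (nat \<Rightarrow> nat) \<Rightarrow> 'a::field" where
  "pmono e0 = (\<lambda>e. if e = e0 then 1 else 0)"

definition pvar :: "nat \<Rightarrow> (nat \<Rightarrow> nat) \<Rightarrow> 'a::field" where
  "pvar i = pmono (\<lambda>j. if j = i then 1 else 0)"

fun ideal_pow :: "('a, 'b) ring_scheme \<Rightarrow> 'a set \<Rightarrow> nat \<Rightarrow> 'a set" where
  "ideal_pow R I 0 = carrier R"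
| "ideal_pow R I (Suc n) = ideal_prod R I (ideal_pow R I n)"

definition ideal_ipow :: "('a, 'b) ring_scheme \<Rightarrow> 'a set \<Rightarrow> int \<Rightarrow> 'a set" where
  "ideal_ipow R I j = (if j \<le> 0 then carrier R else ideal_pow R I (nat j))"

end

theory Submission
  imports Defs
begin

text \<open>Give x the weight b' and each y_i the weight a'. Then I_N is spanned by the monomials
  of weight at least N. A generator x^k Q^(n - n_k) of J_n consists of monomials of weight at
  least k b' + (n - n_k) a', which is at least n a' because n_k a' <= k b'. Conversely, write a
  monomial x^e y^f of weight at least n a' with e = q a + r, r < a; since x^a = g lies in Q^b,
  it equals x^r times an element of Q^(q b + |f|), and q b + |f| >= n - n_r.\<close>

section \<open>Power series in finitely many variables\<close>

lemma mono_ok_le: "mono_ok m e \<Longrightarrow> e' \<le> e \<Longrightarrow> mono_ok m e'"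
  by (auto simp: mono_ok_def le_fun_def) (metis le_zero_eq)

lemma mono_ok_diff: "mono_ok m e \<Longrightarrow> mono_ok m (\<lambda>i. e i - e' i)"
  by (simp add: mono_ok_def)

lemma mono_ok_add: "mono_ok m e \<Longrightarrow> mono_ok m e' \<Longrightarrow> mono_ok m (\<lambda>i. e i + e' i)"
  by (simp add: mono_ok_def)

lemma mono_ok_upd: "mono_ok m e \<Longrightarrow> i \<le> m \<Longrightarrow> mono_ok m (e(i := k))"
  by (simp add: mono_ok_def)

lemma finite_atMost_mono_ok:
  assumes "mono_ok m e"
  shows "finite {..e}"
proof (rule finite_subset)
  show "{..e} \<subseteq> {f. \<forall>i. (i \<in> {..m} \<longrightarrow> f i \<in> {..sum e {..m}}) \<and> (i \<notin> {..m} \<longrightarrow> f i = 0)}"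
  proof (intro subsetI CollectI allI conjI impI)
    fix f i assume "f \<in> {..e}"
    then have "f i \<le> e i"
      by (simp add: le_fun_def)
    then show "i \<in> {..m} \<Longrightarrow> f i \<in> {..sum e {..m}}" and "i \<notin> {..m} \<Longrightarrow> f i = 0"
      using assms member_le_sum[of i "{..m}" e] by (auto simp: mono_ok_def)
  qed
qed (rule finite_set_of_finite_funs; simp)

lemma pser_mult_apply:
  "(f \<otimes>\<^bsub>pser_ring m\<^esub> g) e = (if mono_ok m e then \<Sum>e1\<in>{..e}. f e1 * g (\<lambda>i. e i - e1 i) else 0)"
  by (simp add: pser_ring_def le_fun_def atMost_def)

lemma pser_add: "f \<oplus>\<^bsub>pser_ring m\<^esub> g = (\<lambda>e. f e + g e)"
  and pser_zero: "\<zero>\<^bsub>pser_ring m\<^esub> = (\<lambda>_. 0)"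
  and pser_one: "\<one>\<^bsub>pser_ring m\<^esub> = pmono (\<lambda>_. 0)"
  and pser_carrier: "f \<in> carrier (pser_ring m) \<longleftrightarrow> (\<forall>e. \<not> mono_ok m e \<longrightarrow> f e = 0)"
  by (simp_all add: pser_ring_def pmono_def)

lemma convolution_assoc:
  fixes f g h :: "(nat \<Rightarrow> nat) \<Rightarrow> 'a::comm_semiring_0"
  assumes "finite {..e}"
  shows "(\<Sum>e1\<in>{..e}. (\<Sum>e2\<in>{..e1}. f e2 * g (\<lambda>i. e1 i - e2 i)) * h (\<lambda>i. e i - e1 i))
       = (\<Sum>e2\<in>{..e}. f e2 * (\<Sum>e3\<in>{..\<lambda>i. e i - e2 i}. g e3 * h (\<lambda>i. e i - e2 i - e3 i)))"
proof -
  have fin: "finite {..e'}" if "e' \<le> e" for e'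
    using assms by (rule finite_subset[rotated]) (use that in auto)
  have fin': "finite {..\<lambda>i. e i - e' i}" for e'
    using fin by (simp add: le_fun_def)
  have "(\<Sum>e1\<in>{..e}. (\<Sum>e2\<in>{..e1}. f e2 * g (\<lambda>i. e1 i - e2 i)) * h (\<lambda>i. e i - e1 i))
      = (\<Sum>(e1, e2)\<in>Sigma {..e} atMost. f e2 * g (\<lambda>i. e1 i - e2 i) * h (\<lambda>i. e i - e1 i))"
    by (simp add: sum_distrib_right sum.Sigma assms fin)
  also have "\<dots> = (\<Sum>(e2, e3)\<in>Sigma {..e} (\<lambda>e2. {..\<lambda>i. e i - e2 i}). f e2 * g e3 * h (\<lambda>i. e i - e2 i - e3 i))"
  proof (rule sum.reindex_bij_witness[where i = "\<lambda>(e2, e3). (\<lambda>i. e2 i + e3 i, e2)"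
                                       and j = "\<lambda>(e1, e2). (e2, \<lambda>i. e1 i - e2 i)"])
    fix p assume "p \<in> Sigma {..e} atMost"
    then show "(\<lambda>(e1, e2). (e2, \<lambda>i. e1 i - e2 i)) p \<in> Sigma {..e} (\<lambda>e2. {..\<lambda>i. e i - e2 i})"
      by (auto simp: le_fun_def diff_le_mono intro: order.trans)
  qed (auto simp: le_fun_def, metis add.commute le_diff_conv2)
  also have "\<dots> = (\<Sum>e2\<in>{..e}. f e2 * (\<Sum>e3\<in>{..\<lambda>i. e i - e2 i}. g e3 * h (\<lambda>i. e i - e2 i - e3 i)))"
    by (simp add: sum_distrib_left sum.Sigma assms fin' mult.assoc)
  finally show ?thesis .
qed

lemma convolution_commute:
  fixes f g :: "(nat \<Rightarrow> nat) \<Rightarrow> 'a::comm_semiring_0"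
  shows "(\<Sum>e1\<in>{..e}. f e1 * g (\<lambda>i. e i - e1 i)) = (\<Sum>e1\<in>{..e}. g e1 * f (\<lambda>i. e i - e1 i))"
  by (rule sum.reindex_bij_witness[where i = "\<lambda>e1 i. e i - e1 i" and j = "\<lambda>e1 i. e i - e1 i"])
     (auto simp: le_fun_def mult.commute)

lemma convolution_pmono_zero:
  fixes f :: "(nat \<Rightarrow> nat) \<Rightarrow> 'a::field"
  assumes "finite {..e}"
  shows "(\<Sum>e1\<in>{..e}. pmono (\<lambda>_. 0) e1 * f (\<lambda>i. e i - e1 i)) = f e"
proof -
  have "(\<Sum>e1\<in>{..e}. pmono (\<lambda>_. 0) e1 * f (\<lambda>i. e i - e1 i))
      = (\<Sum>e1\<in>{..e}. if e1 = (\<lambda>_. 0) then f (\<lambda>i. e i - e1 i) else 0)"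
    by (rule sum.cong) (auto simp: pmono_def)
  also have "\<dots> = f e"
    using assms by (simp add: le_fun_def)
  finally show ?thesis .
qed

lemma pser_ring_cring: "cring (pser_ring m :: ((nat \<Rightarrow> nat) \<Rightarrow> 'a::field) ring)"
proof -
  let ?S = "pser_ring m :: ((nat \<Rightarrow> nat) \<Rightarrow> 'a) ring"
  have "abelian_group ?S"
  proof (rule abelian_groupI)
    fix x assume "x \<in> carrier ?S"
    then show "\<exists>y\<in>carrier ?S. y \<oplus>\<^bsub>?S\<^esub> x = \<zero>\<^bsub>?S\<^esub>"
      by (intro bexI[where x = "\<lambda>e. - x e"]) (auto simp: pser_add pser_zero pser_carrier)
  qed (auto simp: pser_add pser_zero pser_carrier add.assoc add.commute)
  moreover have "comm_monoid ?S"
  proof (rule comm_monoidI)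
    fix x y z :: "(nat \<Rightarrow> nat) \<Rightarrow> 'a"
    show "x \<otimes>\<^bsub>?S\<^esub> y \<otimes>\<^bsub>?S\<^esub> z = x \<otimes>\<^bsub>?S\<^esub> (y \<otimes>\<^bsub>?S\<^esub> z)"
    proof
      fix e
      show "(x \<otimes>\<^bsub>?S\<^esub> y \<otimes>\<^bsub>?S\<^esub> z) e = (x \<otimes>\<^bsub>?S\<^esub> (y \<otimes>\<^bsub>?S\<^esub> z)) e"
      proof (cases "mono_ok m e")
        case True
        have "(x \<otimes>\<^bsub>?S\<^esub> y \<otimes>\<^bsub>?S\<^esub> z) e
            = (\<Sum>e1\<in>{..e}. (\<Sum>e2\<in>{..e1}. x e2 * y (\<lambda>i. e1 i - e2 i)) * z (\<lambda>i. e i - e1 i))"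
          using True by (auto simp: pser_mult_apply intro!: sum.cong dest: mono_ok_le)
        also have "\<dots> = (\<Sum>e2\<in>{..e}. x e2 * (\<Sum>e3\<in>{..\<lambda>i. e i - e2 i}. y e3 * z (\<lambda>i. e i - e2 i - e3 i)))"
          by (rule convolution_assoc[OF finite_atMost_mono_ok[OF True]])
        also have "\<dots> = (x \<otimes>\<^bsub>?S\<^esub> (y \<otimes>\<^bsub>?S\<^esub> z)) e"
          using True by (auto simp: pser_mult_apply mono_ok_diff intro!: sum.cong)
        finally show ?thesis .
      qed (simp add: pser_mult_apply)
    qed
  next
    fix x assume "x \<in> carrier ?S"
    then show "\<one>\<^bsub>?S\<^esub> \<otimes>\<^bsub>?S\<^esub> x = x"
      by (auto simp: pser_mult_apply pser_one pser_carrier convolution_pmono_zero finite_atMost_mono_ok)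
  next
    fix x y :: "(nat \<Rightarrow> nat) \<Rightarrow> 'a"
    show "x \<otimes>\<^bsub>?S\<^esub> y = y \<otimes>\<^bsub>?S\<^esub> x"
      by (rule ext) (simp add: pser_mult_apply convolution_commute[of x])
  qed (auto simp: pser_carrier pser_mult_apply pser_one pmono_def mono_ok_def)
  ultimately show ?thesis
  proof (rule cringI)
    fix x y z :: "(nat \<Rightarrow> nat) \<Rightarrow> 'a"
    show "(x \<oplus>\<^bsub>?S\<^esub> y) \<otimes>\<^bsub>?S\<^esub> z = x \<otimes>\<^bsub>?S\<^esub> z \<oplus>\<^bsub>?S\<^esub> y \<otimes>\<^bsub>?S\<^esub> z"
      by (rule ext) (simp add: pser_mult_apply pser_add distrib_right sum.distrib)
  qed
qed

lemma pmono_closed: "mono_ok m e \<Longrightarrow> pmono e \<in> carrier (pser_ring m)"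
  by (auto simp: pser_carrier pmono_def)

lemma pvar_closed: "i \<le> m \<Longrightarrow> pvar i \<in> carrier (pser_ring m)"
  by (simp add: pvar_def pmono_closed mono_ok_def)

lemma pmono_mult:
  assumes "mono_ok m e" and "mono_ok m e'"
  shows "pmono e \<otimes>\<^bsub>pser_ring m\<^esub> pmono e' = (pmono (\<lambda>i. e i + e' i) :: _ \<Rightarrow> 'a::field)"
proof
  fix E
  have split: "e \<le> E \<and> (\<lambda>i. E i - e i) = e' \<longleftrightarrow> E = (\<lambda>i. e i + e' i)"
    by (auto simp: le_fun_def fun_eq_iff) (metis le_add_diff_inverse)
  show "(pmono e \<otimes>\<^bsub>pser_ring m\<^esub> pmono e') E = (pmono (\<lambda>i. e i + e' i) :: _ \<Rightarrow> 'a) E"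
  proof (cases "mono_ok m E")
    case True
    have "(pmono e \<otimes>\<^bsub>pser_ring m\<^esub> pmono e') E
        = (\<Sum>e1\<in>{..E}. if e1 = e then (if (\<lambda>i. E i - e1 i) = e' then 1 else 0 :: 'a) else 0)"
      using True by (auto simp: pser_mult_apply pmono_def intro!: sum.cong)
    also have "\<dots> = (if e \<le> E \<and> (\<lambda>i. E i - e i) = e' then 1 else 0)"
      by (simp add: finite_atMost_mono_ok[OF True])
    also have "\<dots> = (pmono (\<lambda>i. e i + e' i) :: _ \<Rightarrow> 'a) E"
      unfolding split pmono_def by simp
    finally show ?thesis .
  next
    case False
    then have "E \<noteq> (\<lambda>i. e i + e' i)"
      using assms mono_ok_add by blast
    with False show ?thesis
      by (simp add: pser_mult_apply pmono_def)
  qed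
qed

section \<open>Products and powers of ideals\<close>

lemma (in cring) mult_preimage_ideal:
  assumes K: "ideal K R" and t: "t \<in> carrier R"
  shows "ideal {x \<in> carrier R. x \<otimes> t \<in> K} R"
proof (rule idealI)
  interpret K: ideal K R by (rule K)
  show "subgroup {x \<in> carrier R. x \<otimes> t \<in> K} (add_monoid R)"
    by (rule add.subgroupI) (use t in \<open>auto simp: l_distr l_minus intro!: exI[of _ \<zero>]\<close>)
  show "x \<otimes> a \<in> {x \<in> carrier R. x \<otimes> t \<in> K}" if "a \<in> {x \<in> carrier R. x \<otimes> t \<in> K}" "x \<in> carrier R" for a x
    using that t by (simp add: m_assoc K.I_l_closed)
  show "a \<otimes> x \<in> {x \<in> carrier R. x \<otimes> t \<in> K}" if "a \<in> {x \<in> carrier R. x \<otimes> t \<in> K}" "x \<in> carrier R" for a x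
    using that t by (simp add: m_comm[of a x] m_assoc K.I_l_closed)
qed (rule ring_axioms)

lemma (in cring) genideal_mult_mem:
  assumes K: "ideal K R" and G: "G \<subseteq> carrier R" and H: "H \<subseteq> carrier R"
    and gen: "\<And>g h. g \<in> G \<Longrightarrow> h \<in> H \<Longrightarrow> g \<otimes> h \<in> K"
    and x: "x \<in> Idl G" and y: "y \<in> Idl H"
  shows "x \<otimes> y \<in> K"
proof -
  have "Idl G \<subseteq> {x \<in> carrier R. x \<otimes> h \<in> K}" if "h \<in> H" for h
    using G gen that H by (intro genideal_minimal mult_preimage_ideal K) auto
  then have xh: "x \<otimes> h \<in> K" if "h \<in> H" for h
    using x that by blast
  have xc: "x \<in> carrier R"
    using x genideal_ideal[OF G] by (rule ideal.Icarr[rotated])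
  have "h \<otimes> x \<in> K" if "h \<in> H" for h
    using xh[OF that] xc H that by (auto simp: m_comm)
  then have "Idl H \<subseteq> {y \<in> carrier R. y \<otimes> x \<in> K}"
    using H xc by (intro genideal_minimal mult_preimage_ideal K) auto
  then show ?thesis
    using y xc by (auto simp: m_comm)
qed

lemma (in ring) ideal_prod_subset:
  assumes "ideal K R" and "\<And>i j. i \<in> I \<Longrightarrow> j \<in> J \<Longrightarrow> i \<otimes> j \<in> K"
  shows "ideal_prod R I J \<subseteq> K"
proof
  fix s assume "s \<in> ideal_prod R I J"
  then show "s \<in> K"
    using assms(1)
    by (induction s rule: ideal_prod.induct) (auto intro: assms(2) additive_subgroup.a_closed[OF ideal.axioms(1)])
qed

lemma (in ring) ideal_pow_ideal: "ideal I R \<Longrightarrow> ideal (ideal_pow R I n) R"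
  by (induction n) (auto intro: oneideal ideal_prod_is_ideal)

lemma (in cring) ideal_pow_add:
  assumes "ideal I R"
  shows "ideal_pow R I (i + j) = ideal_prod R (ideal_pow R I i) (ideal_pow R I j)"
proof (induction i)
  case 0
  then show ?case
    using assms by (simp add: ideal_pow_ideal ideal_prod_commute[OF oneideal] ideal_prod_one)
next
  case (Suc i)
  then show ?case
    using assms by (simp add: ideal_pow_ideal ideal_prod_assoc)
qed

lemma (in cring) ideal_pow_mult_mem:
  "\<lbrakk>ideal I R; x \<in> ideal_pow R I i; y \<in> ideal_pow R I j\<rbrakk> \<Longrightarrow> x \<otimes> y \<in> ideal_pow R I (i + j)"
  by (simp add: ideal_pow_add ideal_prod.prod)

lemma (in cring) ideal_pow_nat_pow_mem:
  assumes "ideal I R" and "x \<in> ideal_pow R I k"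
  shows "x [^] q \<in> ideal_pow R I (q * k)"
proof (induction q)
  case (Suc q)
  then show ?case
    using ideal_pow_mult_mem[OF assms(1) Suc assms(2)] by (simp add: add.commute)
qed simp

lemma (in cring) ideal_pow_antimono:
  assumes "ideal I R" and "i \<le> j"
  shows "ideal_pow R I j \<subseteq> ideal_pow R I i"
proof -
  obtain k where "j = i + k" using assms(2) le_Suc_ex by blast
  then show ?thesis
    using ideal_prod_inter[OF ideal_pow_ideal ideal_pow_ideal] assms(1) by (simp add: ideal_pow_add)
qed

lemma ideal_ipow_of_nat_diff: "ideal_ipow R I (int n - int k) = ideal_pow R I (n - k)"
  by (simp add: ideal_ipow_def nat_diff_distrib)

lemma (in ring_hom_ring) genideal_image_subset:
  assumes "G \<subseteq> carrier R"
  shows "h ` genideal R G \<subseteq> genideal S (h ` G)"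
proof -
  have "h ` G \<subseteq> genideal S (h ` G)"
    using assms by (intro S.genideal_self) auto
  then have "genideal R G \<subseteq> {r \<in> carrier R. h r \<in> genideal S (h ` G)}"
    using assms by (intro R.genideal_minimal ideal_vimage S.genideal_ideal) auto
  then show ?thesis by blast
qed

lemma (in ring_hom_ring) ideal_pow_image_subset:
  assumes I: "ideal I R" and I': "ideal I' S" and "h ` I \<subseteq> I'"
  shows "h ` ideal_pow R I n \<subseteq> ideal_pow S I' n"
proof (induction n)
  case (Suc n)
  have "ideal_prod R I (ideal_pow R I n) \<subseteq> {r \<in> carrier R. h r \<in> ideal_pow S I' (Suc n)}"
  proof (rule R.ideal_prod_subset)
    show "ideal {r \<in> carrier R. h r \<in> ideal_pow S I' (Suc n)} R"
      by (intro ideal_vimage S.ideal_pow_ideal I')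
    fix i j assume "i \<in> I" "j \<in> ideal_pow R I n"
    moreover have "i \<in> carrier R" "j \<in> carrier R"
      using calculation I R.ideal_pow_ideal by (auto intro: ideal.Icarr)
    ultimately show "i \<otimes>\<^bsub>R\<^esub> j \<in> {r \<in> carrier R. h r \<in> ideal_pow S I' (Suc n)}"
      using Suc assms(3) by (auto intro: ideal_prod.prod)
  qed
  then show ?case by auto
qed auto

section \<open>Weighted monomial ideals\<close>

lemma mult_le_weight_floor_div:
  fixes a b a' b' :: nat
  assumes "0 < a" and "a * b' = a' * b"
  shows "n * a' \<le> k * b' + (n - k * b div a) * a'"
proof -
  define f where "f = k * b div a"
  have "f * a' * a = f * a * a'"
    by (simp only: ac_simps)
  also have "\<dots> \<le> k * b * a'"
    unfolding f_def by (intro mult_le_mono1 div_times_less_eq_dividend)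
  also have "\<dots> = k * b' * a"
    using assms(2) by (simp add: ac_simps)
  finally have "f * a' \<le> k * b'"
    using assms(1) by simp
  moreover have "n * a' \<le> f * a' + (n - f) * a'"
    using mult_le_mono1[of n "f + (n - f)" a'] by (simp add: add_mult_distrib)
  ultimately show ?thesis
    unfolding f_def by linarith
qed

lemma diff_floor_div_le_of_weight:
  fixes a b a' b' :: nat
  assumes "0 < a" "0 < a'" and "a * b' = a' * b"
    and "n * a' \<le> (q * a + r) * b' + s * a'"
  shows "n - r * b div a \<le> q * b + s"
proof -
  have "(q * a + r) * b' = q * (a * b') + r * b'"
    by (simp add: algebra_simps)
  also have "\<dots> = q * b * a' + r * b'"
    unfolding assms(3) by (simp add: algebra_simps)
  finally have "(q * a + r) * b' = q * b * a' + r * b'" .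
  then have "n * a' \<le> (q * b + s) * a' + r * b'"
    using assms(4) unfolding add_mult_distrib by linarith
  then have "(n - (q * b + s)) * a' \<le> r * b'"
    by (simp add: diff_mult_distrib)
  then have "(n - (q * b + s)) * a * a' \<le> r * b' * a"
    by (metis mult_le_mono1 mult.commute mult.left_commute)
  also have "\<dots> = r * b * a'"
    using assms(3) by (simp add: ac_simps)
  finally have "n - (q * b + s) \<le> r * b div a"
    using assms(1,2) by (simp add: less_eq_div_iff_mult_less_eq)
  then show ?thesis
    by linarith
qed

lemma div_gcd_cross_mult: "(a::nat) * (b div gcd a b) = a div gcd a b * b"
  by (simp add: div_mult_swap dvd_div_mult)

text \<open>A commutative ring together with the images mon e of the monomials
  x^(e 0) y_1^(e 1) ... y_m^(e m); thus var 0 is x and var i is y_i for 1 <= i <= m.\<close>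

locale monomial_cring = cring +
  fixes m :: nat and mon :: "(nat \<Rightarrow> nat) \<Rightarrow> 'a"
  assumes mon_closed: "mono_ok m e \<Longrightarrow> mon e \<in> carrier R"
    and mon_zero: "mon (\<lambda>_. 0) = \<one>"
    and mon_add: "\<lbrakk>mono_ok m e; mono_ok m e'\<rbrakk> \<Longrightarrow> mon (\<lambda>i. e i + e' i) = mon e \<otimes> mon e'"
begin

definition var :: "nat \<Rightarrow> 'a" where
  "var i = mon (\<lambda>j. if j = i then 1 else 0)"

abbreviation var_ideal :: "'a set" where
  "var_ideal \<equiv> Idl (var ` {1..m})"

abbreviation ydeg :: "(nat \<Rightarrow> nat) \<Rightarrow> nat" where
  "ydeg e \<equiv> \<Sum>i\<in>{1..m}. e i"

definition mon_ideal :: "((nat \<Rightarrow> nat) \<Rightarrow> bool) \<Rightarrow> 'a set" where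
  "mon_ideal P = Idl {mon e | e. mono_ok m e \<and> P e}"

text \<open>weighted_ideal b' a' N is I_N and mixed_ideal a b n is J_n; the truncated subtraction
  in the exponent of var_ideal encodes the convention Q^j = A for j <= 0.\<close>

definition weighted_ideal :: "nat \<Rightarrow> nat \<Rightarrow> nat \<Rightarrow> 'a set" where
  "weighted_ideal u v N = mon_ideal (\<lambda>e. N \<le> e 0 * u + ydeg e * v)"

definition mixed_ideal :: "nat \<Rightarrow> nat \<Rightarrow> nat \<Rightarrow> 'a set" where
  "mixed_ideal a b n =
     Idl (\<Union>k\<in>{0..<a}. (\<lambda>q. var 0 [^] k \<otimes> q) ` ideal_pow R var_ideal (n - k * b div a))"

lemma var_closed: "i \<le> m \<Longrightarrow> var i \<in> carrier R"
  by (simp add: var_def mon_closed mono_ok_def)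

lemma var_ideal_ideal: "ideal var_ideal R"
  by (rule genideal_ideal) (auto intro: var_closed)

lemma var_pow_mult_mon:
  "\<lbrakk>i \<le> m; mono_ok m e\<rbrakk> \<Longrightarrow> var i [^] k \<otimes> mon e = mon (e(i := e i + k))"
proof (induction k arbitrary: e)
  case 0
  then show ?case by (simp add: mon_closed)
next
  case (Suc k)
  have "var i [^] Suc k \<otimes> mon e = var i [^] k \<otimes> (var i \<otimes> mon e)"
    using Suc.prems by (simp add: var_closed mon_closed m_assoc)
  also have "var i \<otimes> mon e = mon (e(i := e i + 1))"
  proof -
    have "(\<lambda>j. (if j = i then 1 else 0) + e j) = e(i := e i + 1)"
      by auto
    then show ?thesis
      using Suc.prems mon_add[of "\<lambda>j. if j = i then 1 else 0" e] by (simp add: var_def mono_ok_def)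
  qed
  also have "var i [^] k \<otimes> \<dots> = mon ((e(i := e i + 1))(i := (e(i := e i + 1)) i + k))"
    using Suc.prems by (intro Suc.IH mono_ok_upd)
  also have "(e(i := e i + 1))(i := (e(i := e i + 1)) i + k) = e(i := e i + Suc k)"
    by simp
  finally show ?case .
qed

lemma var_pow_eq_mon: "i \<le> m \<Longrightarrow> var i [^] k = mon ((\<lambda>_. 0)(i := k))"
  using var_pow_mult_mon[of i "\<lambda>_. 0" k] by (simp add: mon_zero var_closed mono_ok_def)

lemma mon_ideal_ideal: "ideal (mon_ideal P) R"
  unfolding mon_ideal_def by (rule genideal_ideal) (auto simp: mon_closed)

lemma mon_in_mon_ideal: "\<lbrakk>mono_ok m e; P e\<rbrakk> \<Longrightarrow> mon e \<in> mon_ideal P"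
  unfolding mon_ideal_def by (rule genideal_self[THEN subsetD]) (auto simp: mon_closed)

lemma mon_ideal_mult_mem:
  assumes "x \<in> mon_ideal P" and "y \<in> mon_ideal P'"
    and "\<And>e e'. \<lbrakk>mono_ok m e; mono_ok m e'; P e; P' e'\<rbrakk> \<Longrightarrow> P'' (\<lambda>i. e i + e' i)"
  shows "x \<otimes> y \<in> mon_ideal P''"
proof (rule genideal_mult_mem[OF mon_ideal_ideal])
  show "x \<in> Idl {mon e | e. mono_ok m e \<and> P e}" "y \<in> Idl {mon e | e. mono_ok m e \<and> P' e}"
    using assms(1,2) unfolding mon_ideal_def .
  fix g h assume "g \<in> {mon e | e. mono_ok m e \<and> P e}" "h \<in> {mon e | e. mono_ok m e \<and> P' e}"
  then show "g \<otimes> h \<in> mon_ideal P''"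
    by (auto simp flip: mon_add intro!: mon_in_mon_ideal assms(3) mono_ok_add)
qed (auto simp: mon_closed)

lemma var_ideal_pow_subset: "ideal_pow R var_ideal j \<subseteq> mon_ideal (\<lambda>e. j \<le> ydeg e)"
proof (induction j)
  case 0
  have "\<one> \<in> mon_ideal (\<lambda>e. 0 \<le> ydeg e)"
    using mon_in_mon_ideal[of "\<lambda>_. 0"] by (simp add: mon_zero mono_ok_def)
  then show ?case
    using ideal.one_imp_carrier[OF mon_ideal_ideal] by simp
next
  case (Suc j)
  have "var_ideal \<subseteq> mon_ideal (\<lambda>e. 1 \<le> ydeg e)"
    by (rule genideal_minimal[OF mon_ideal_ideal])
       (auto simp: var_def mono_ok_def intro!: mon_in_mon_ideal)
  have "ideal_prod R var_ideal (ideal_pow R var_ideal j) \<subseteq> mon_ideal (\<lambda>e. Suc j \<le> ydeg e)"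
  proof (rule ideal_prod_subset[OF mon_ideal_ideal])
    fix x y assume "x \<in> var_ideal" and "y \<in> ideal_pow R var_ideal j"
    with Suc \<open>var_ideal \<subseteq> _\<close>
    have "x \<in> mon_ideal (\<lambda>e. 1 \<le> ydeg e)" and "y \<in> mon_ideal (\<lambda>e. j \<le> ydeg e)"
      by auto
    then show "x \<otimes> y \<in> mon_ideal (\<lambda>e. Suc j \<le> ydeg e)"
      by (rule mon_ideal_mult_mem) (simp add: sum.distrib)
  qed
  then show ?case by simp
qed

lemma mon_in_var_ideal_pow:
  "\<lbrakk>mono_ok m e; e 0 = 0\<rbrakk> \<Longrightarrow> mon e \<in> ideal_pow R var_ideal (ydeg e)"
proof (induction "ydeg e" arbitrary: e)
  case 0
  then show ?case by (simp add: mon_closed)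
next
  case (Suc s)
  then obtain i where i: "i \<in> {1..m}" "e i \<noteq> 0"
    by (metis Zero_not_Suc sum.neutral)
  define e' where "e' = e(i := e i - 1)"
  have e': "mono_ok m e'" "e' 0 = 0" "e = e'(i := e' i + 1)"
    using Suc.prems i by (auto simp: e'_def mono_ok_upd)
  have "ydeg e = ydeg e' + 1"
    using i by (simp add: e'(3) sum.remove)
  then have "mon e' \<in> ideal_pow R var_ideal s"
    using Suc.hyps(1)[OF _ e'(1,2)] Suc.hyps(2) by simp
  moreover have "var i \<in> var_ideal"
    using i var_closed by (intro genideal_self[THEN subsetD]) auto
  ultimately have "var i [^] (1::nat) \<otimes> mon e' \<in> ideal_pow R var_ideal (Suc s)"
    using i var_closed by (simp add: ideal_prod.prod)
  then show ?case
    using var_pow_mult_mon[of i e' 1] i e' Suc.hyps(2) by simp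
qed

lemma mixed_generators_closed:
  "(\<Union>k\<in>{0..<a}. (\<lambda>q. var 0 [^] k \<otimes> q) ` ideal_pow R var_ideal (n - k * b div a)) \<subseteq> carrier R"
  using ideal.Icarr[OF ideal_pow_ideal[OF var_ideal_ideal]] by (auto simp: var_closed)

lemma mixed_ideal_ideal: "ideal (mixed_ideal a b n) R"
  unfolding mixed_ideal_def by (rule genideal_ideal[OF mixed_generators_closed])

lemma mixed_ideal_subset_weighted_ideal:
  assumes "0 < a" and "a * b' = a' * b"
  shows "mixed_ideal a b n \<subseteq> weighted_ideal b' a' (n * a')"
  unfolding mixed_ideal_def
proof (rule genideal_minimal, unfold weighted_ideal_def, rule mon_ideal_ideal, clarify)
  fix k q assume "k \<in> {0..<a}" and "q \<in> ideal_pow R var_ideal (n - k * b div a)"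
  have "var 0 [^] k \<in> mon_ideal (\<lambda>e. k \<le> e 0)"
    by (auto simp: var_pow_eq_mon mono_ok_def intro: mon_in_mon_ideal)
  moreover have "q \<in> mon_ideal (\<lambda>e. n - k * b div a \<le> ydeg e)"
    using \<open>q \<in> _\<close> var_ideal_pow_subset by blast
  ultimately show "var 0 [^] k \<otimes> q \<in> mon_ideal (\<lambda>e. n * a' \<le> e 0 * b' + ydeg e * a')"
  proof (rule mon_ideal_mult_mem)
    fix e e' :: "nat \<Rightarrow> nat" assume "k \<le> e 0" and "n - k * b div a \<le> ydeg e'"
    then have "k * b' + (n - k * b div a) * a' \<le> (e 0 + e' 0) * b' + (ydeg e + ydeg e') * a'"
      by (intro add_mono mult_le_mono1) auto
    then show "n * a' \<le> (e 0 + e' 0) * b' + ydeg (\<lambda>i. e i + e' i) * a'"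
      using mult_le_weight_floor_div[OF assms, of n k] by (simp add: sum.distrib)
  qed
qed

lemma weighted_ideal_subset_mixed_ideal:
  assumes "0 < a" "0 < a'" "a * b' = a' * b"
    and x_pow: "var 0 [^] a \<in> ideal_pow R var_ideal b"
  shows "weighted_ideal b' a' (n * a') \<subseteq> mixed_ideal a b n"
  unfolding weighted_ideal_def mon_ideal_def
proof (rule genideal_minimal[OF mixed_ideal_ideal], clarify)
  fix e assume e: "mono_ok m e" and weight: "n * a' \<le> e 0 * b' + ydeg e * a'"
  define q r where "q = e 0 div a" and "r = e 0 mod a"
  define ey where "ey = e(0 := 0)"
  have ey: "mono_ok m ey" "ey 0 = 0" "ydeg ey = ydeg e"
    using e by (auto simp: ey_def mono_ok_upd intro: sum.cong)
  have x0: "var 0 \<in> carrier R"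
    by (simp add: var_closed)
  have "mon e = var 0 [^] (r + a * q) \<otimes> mon ey"
    using var_pow_mult_mon[of 0 ey "e 0"] ey by (simp add: q_def r_def ey_def)
  also have "\<dots> = var 0 [^] r \<otimes> ((var 0 [^] a) [^] q \<otimes> mon ey)"
    using x0 ey by (simp add: nat_pow_mult[symmetric] nat_pow_pow m_assoc mon_closed)
  finally have mon_e: "mon e = var 0 [^] r \<otimes> ((var 0 [^] a) [^] q \<otimes> mon ey)" .
  have "(var 0 [^] a) [^] q \<otimes> mon ey \<in> ideal_pow R var_ideal (q * b + ydeg e)"
    using ideal_pow_mult_mem[OF var_ideal_ideal ideal_pow_nat_pow_mem[OF var_ideal_ideal x_pow]
                               mon_in_var_ideal_pow[OF ey(1,2)]] ey(3)
    by simp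
  moreover have "n - r * b div a \<le> q * b + ydeg e"
    using weight assms(1-3) by (intro diff_floor_div_le_of_weight) (simp_all add: q_def r_def)
  ultimately have "(var 0 [^] a) [^] q \<otimes> mon ey \<in> ideal_pow R var_ideal (n - r * b div a)"
    using ideal_pow_antimono[OF var_ideal_ideal] by blast
  moreover have "r \<in> {0..<a}"
    using assms(1) by (simp add: r_def)
  ultimately show "mon e \<in> mixed_ideal a b n"
    unfolding mon_e mixed_ideal_def by (intro genideal_self[OF mixed_generators_closed, THEN subsetD] UN_I) auto
qed

theorem mixed_ideal_eq_weighted_ideal:
  assumes "0 < a" "0 < a'" "a * b' = a' * b"
    and "var 0 [^] a \<in> ideal_pow R var_ideal b"
  shows "mixed_ideal a b n = weighted_ideal b' a' (n * a')"
  using assms mixed_ideal_subset_weighted_ideal weighted_ideal_subset_mixed_ideal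
  by (intro equalityI) auto

end

section \<open>The quotient ring\<close>

lemma quotient_monomial_cring:
  fixes F :: "((nat \<Rightarrow> nat) \<Rightarrow> 'a::field) set"
  assumes "ideal F (pser_ring m)"
  shows "monomial_cring (pser_ring m Quot F) m (\<lambda>e. F +>\<^bsub>pser_ring m\<^esub> pmono e)"
proof -
  interpret F: ideal F "pser_ring m"
    by (rule assms)
  interpret h: ring_hom_ring "pser_ring m" "pser_ring m Quot F" "(+>\<^bsub>pser_ring m\<^esub>) F"
    by (rule F.rcos_ring_hom_ring)
  show ?thesis
  proof (intro monomial_cring.intro monomial_cring_axioms.intro)
    show "cring (pser_ring m Quot F)"
      by (rule F.quotient_is_cring[OF pser_ring_cring])
    show "F +>\<^bsub>pser_ring m\<^esub> pmono (\<lambda>_. 0) = \<one>\<^bsub>pser_ring m Quot F\<^esub>"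
      using h.hom_one by (simp add: pser_one)
  qed (simp_all add: pmono_closed pmono_mult flip: h.hom_mult)
qed

lemma quotient_pvar_pow_mem:
  fixes m a b :: nat and g :: "(nat \<Rightarrow> nat) \<Rightarrow> 'a::field"
  defines "S \<equiv> pser_ring m"
  defines "F \<equiv> genideal S {pvar 0 [^]\<^bsub>S\<^esub> a \<ominus>\<^bsub>S\<^esub> g}"
  assumes "g \<in> carrier S" and "g \<in> ideal_pow S (genideal S (pvar ` {1..m})) b"
  shows "(F +>\<^bsub>S\<^esub> pvar 0) [^]\<^bsub>S Quot F\<^esub> a
           \<in> ideal_pow (S Quot F) (genideal (S Quot F) ((\<lambda>i. F +>\<^bsub>S\<^esub> pvar i) ` {1..m})) b"
proof -
  interpret S: cring S
    unfolding S_def by (rule pser_ring_cring)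
  have pvar: "pvar i \<in> carrier S" if "i \<le> m" for i
    unfolding S_def using that by (rule pvar_closed)
  then have pvars: "pvar ` {1..m} \<subseteq> carrier S" and x_pow: "pvar 0 [^]\<^bsub>S\<^esub> a \<in> carrier S"
    by auto
  have F: "ideal F S" and "pvar 0 [^]\<^bsub>S\<^esub> a \<ominus>\<^bsub>S\<^esub> g \<in> F"
    using x_pow assms(3) unfolding F_def by (auto intro: S.genideal_ideal S.genideal_self[THEN subsetD])
  then have "F +>\<^bsub>S\<^esub> (pvar 0 [^]\<^bsub>S\<^esub> a) = F +>\<^bsub>S\<^esub> g"
    using x_pow assms(3) by (simp add: S.quotient_eq_iff_same_a_r_cos)
  interpret cls: ring_hom_ring S "S Quot F" "(+>\<^bsub>S\<^esub>) F"
    by (rule ideal.rcos_ring_hom_ring[OF F])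
  have "(+>\<^bsub>S\<^esub>) F ` ideal_pow S (genideal S (pvar ` {1..m})) b
      \<subseteq> ideal_pow (S Quot F) (genideal (S Quot F) ((\<lambda>i. F +>\<^bsub>S\<^esub> pvar i) ` {1..m})) b"
    using cls.genideal_image_subset[OF pvars] pvars
    by (intro cls.ideal_pow_image_subset S.genideal_ideal cls.S.genideal_ideal)
       (auto simp: image_image)
  with assms(4) show ?thesis
    using \<open>F +>\<^bsub>S\<^esub> (pvar 0 [^]\<^bsub>S\<^esub> a) = F +>\<^bsub>S\<^esub> g\<close> pvar by (auto simp: cls.hom_nat_pow)
qed

theorem proposition5p1:
  fixes m a b :: nat
    and g :: "(nat \<Rightarrow> nat) \<Rightarrow> 'k::alg_closed_field"
  defines "S \<equiv> (pser_ring m :: ((nat \<Rightarrow> nat) \<Rightarrow> 'k) ring)"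
  defines "Y \<equiv> genideal S (pvar ` {1..m})"
  defines "F \<equiv> genideal S {pvar 0 [^]\<^bsub>S\<^esub> a \<ominus>\<^bsub>S\<^esub> g}"
  defines "A \<equiv> S Quot F"
  defines "cls \<equiv> (\<lambda>s. F +>\<^bsub>S\<^esub> s)"
  defines "Q \<equiv> genideal A ((\<lambda>i. cls (pvar i)) ` {1..m})"
  defines "d \<equiv> gcd a b"
  defines "a' \<equiv> a div d"
  defines "b' \<equiv> b div d"
  defines "nk \<equiv> (\<lambda>k::nat. (k * b) div a)"
  defines "J \<equiv> (\<lambda>n::nat. genideal A
              (\<Union>k\<in>{0..<a}. (\<lambda>q. cls (pvar 0) [^]\<^bsub>A\<^esub> k \<otimes>\<^bsub>A\<^esub> q) `
                              ideal_ipow A Q (int n - int (nk k))))"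
  defines "I \<equiv> (\<lambda>n::nat. genideal A
              {cls (pmono e) | e. mono_ok m e \<and> e 0 * b' + (\<Sum>i\<in>{1..m}. e i) * a' \<ge> n})"
  assumes "m \<ge> 1" and "2 \<le> a" and "a \<le> b"
    and "g \<in> carrier S"
    and "\<forall>e. e 0 \<noteq> 0 \<longrightarrow> g e = 0"
    and "g \<in> ideal_pow S Y b" and "g \<notin> ideal_pow S Y (Suc b)"
  shows "\<forall>n\<ge>1. J n = I (n * a')"
proof -
  interpret S: cring S
    unfolding S_def by (rule pser_ring_cring)
  have "pvar 0 \<in> carrier S"
    unfolding S_def by (simp add: pvar_closed)
  then have "ideal F S"
    using \<open>g \<in> carrier S\<close> unfolding F_def by (intro S.genideal_ideal) auto
  then interpret A: monomial_cring A m "\<lambda>e. cls (pmono e)"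
    unfolding A_def cls_def S_def by (rule quotient_monomial_cring)
  have var: "A.var = (\<lambda>i. cls (pvar i))"
    by (simp add: A.var_def pvar_def fun_eq_iff)
  have "A.var 0 [^]\<^bsub>A\<^esub> a \<in> ideal_pow A A.var_ideal b"
    unfolding var using quotient_pvar_pow_mem[of g m b a] \<open>g \<in> carrier S\<close> \<open>g \<in> ideal_pow S Y b\<close>
    unfolding S_def Y_def F_def A_def cls_def by simp
  moreover have "0 < a'" "a * b' = a' * b"
    using \<open>2 \<le> a\<close> div_gcd_cross_mult[of a b]
    by (auto simp: a'_def b'_def d_def div_greater_zero_iff dvd_imp_le)
  moreover have "J n = A.mixed_ideal a b n" for n
    unfolding J_def A.mixed_ideal_def nk_def ideal_ipow_of_nat_diff Q_def var ..
  moreover have "I N = A.weighted_ideal b' a' N" for N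
    unfolding I_def A.weighted_ideal_def A.mon_ideal_def ..
  ultimately show ?thesis
    using A.mixed_ideal_eq_weighted_ideal \<open>2 \<le> a\<close> by simp
qed

end
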